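(* Let $B=(B,+,0)$ be a unitary magma, let $(X,\varphi)$ and $(X',\varphi')$ be $B$-actions, and let $f\colon X\to X'$ be a morphism of unitary magmas (with respect to the structures $x+x'=\varphi(x,0,x',0)$ on $X$ and $y+y'=\varphi'(y,0,y',0)$ on $X'$). If $f$ is an isomorphism and a $B$-morphism, then there exists a unique isomorphism of unitary magmas $g\colon X\rtimes_\varphi B\to X'\rtimes_{\varphi'}B$ such that $\pi_{X'}g=f\pi_X$, $g(x,0)=(f(x),0)$ for all $x\in X$, and $g(0,b)=(0,b)$ for all $b\in B$, where $\pi_X,\pi_{X'}$ denote the first-coordinate projections.
   Context: A unitary magma is a set with a binary operation $+$ and an element $0$ with $b+0=b=0+b$ for all $b$; morphisms preserve $+$ and $0$. A $B$-action is a pair $(X,\varphi)$ with $X$ a set and $\varphi\colon X\times B\times X\times B\to X$ a map such that: (1) there is an element $0\in X$ with $\varphi(x,0,0,0)=x=\varphi(0,0,x,0)$ for all $x\in X$; (2) $\varphi(x,b,0,0)=\varphi(x,0,0,b)=\varphi(0,0,x,b)$ for all $x\in X,b\in B$; (3) $\varphi(0,b,0,b')=0$ for all $b,b'\in B$; (4) writing $\varphi_{00}(x,b)=\varphi(x,0,0,b)$, for all $x,x'\in X$, $b,b'\in B$: $\varphi(x,b,x',b')=\varphi_{00}\big(\varphi(\varphi_{00}(x,b),b,\varphi_{00}(x',b'),b'),\,b+b'\big)$. The semidirect product $X\rtimes_\varphi B$ is the set $\{(x,b)\in X\times B\mid\varphi(x,0,0,b)=x\}$ with operation $(x,b)+(x',b')=(\varphi(x,b,x',b'),b+b')$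 and neutral element $(0,0)$. A $B$-morphism from $(X,\varphi)$ to $(X',\varphi')$ is a map $f\colon X\to X'$ with $f(0)=0$ and $\varphi'(f(x),b,f(x'),b')=f(\varphi(x,b,x',b'))$ for all $x,x'\in X$, $b,b'\in B$. *)

theory Defs
  imports Main
begin

definition unitary_magma :: "'a set \<Rightarrow> ('a \<Rightarrow> 'a \<Rightarrow> 'a) \<Rightarrow> 'a \<Rightarrow> bool" where
  "unitary_magma S add z \<longleftrightarrow> z \<in> S \<and> (\<forall>a\<in>S. \<forall>b\<in>S. add a b \<in> S)
     \<and> (\<forall>a\<in>S. add a z = a \<and> add z a = a)"

definition magma_hom ::
  "'a set \<Rightarrow> ('a \<Rightarrow> 'a \<Rightarrow> 'a) \<Rightarrow> 'a \<Rightarrow> 'c set \<Rightarrow> ('c \<Rightarrow> 'c \<Rightarrow> 'c) \<Rightarrow> 'c \<Rightarrow> ('a \<Rightarrow> 'c) \<Rightarrow> bool" where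
  "magma_hom S add z S' add' z' g \<longleftrightarrow> (\<forall>a\<in>S. g a \<in> S')
     \<and> (\<forall>a\<in>S. \<forall>b\<in>S. g (add a b) = add' (g a) (g b)) \<and> g z = z'"

definition magma_iso ::
  "'a set \<Rightarrow> ('a \<Rightarrow> 'a \<Rightarrow> 'a) \<Rightarrow> 'a \<Rightarrow> 'c set \<Rightarrow> ('c \<Rightarrow> 'c \<Rightarrow> 'c) \<Rightarrow> 'c \<Rightarrow> ('a \<Rightarrow> 'c) \<Rightarrow> bool" where
  "magma_iso S add z S' add' z' g \<longleftrightarrow> magma_hom S add z S' add' z' g \<and> bij_betw g S S'"

text \<open>B-action (X, phi), B = (UNIV, addB, zB), X = UNIV of type 'x, with distinguished element zX
  (the element 0 of X from condition (1)).\<close>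
definition B_action :: "('b \<Rightarrow> 'b \<Rightarrow> 'b) \<Rightarrow> 'b \<Rightarrow> 'x \<Rightarrow> ('x \<Rightarrow> 'b \<Rightarrow> 'x \<Rightarrow> 'b \<Rightarrow> 'x) \<Rightarrow> bool" where
  "B_action addB zB zX phi \<longleftrightarrow>
     (\<forall>x. phi x zB zX zB = x \<and> phi zX zB x zB = x)
   \<and> (\<forall>x b. phi x b zX zB = phi x zB zX b \<and> phi x zB zX b = phi zX zB x b)
   \<and> (\<forall>b b'. phi zX b zX b' = zX)
   \<and> (\<forall>x x' b b'. phi x b x' b' =
        phi (phi (phi x zB zX b) b (phi x' zB zX b') b') zB zX (addB b b'))"

definition sdp_carrier :: "'b \<Rightarrow> 'x \<Rightarrow> ('x \<Rightarrow> 'b \<Rightarrow> 'x \<Rightarrow> 'b \<Rightarrow> 'x) \<Rightarrow> ('x \<times> 'b) set" where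
  "sdp_carrier zB zX phi = {(x, b). phi x zB zX b = x}"

definition sdp_add :: "('b \<Rightarrow> 'b \<Rightarrow> 'b) \<Rightarrow> ('x \<Rightarrow> 'b \<Rightarrow> 'x \<Rightarrow> 'b \<Rightarrow> 'x) \<Rightarrow> ('x \<times> 'b) \<Rightarrow> ('x \<times> 'b) \<Rightarrow> ('x \<times> 'b)" where
  "sdp_add addB phi p q = (phi (fst p) (snd p) (fst q) (snd q), addB (snd p) (snd q))"

definition B_morphism :: "'x \<Rightarrow> ('x \<Rightarrow> 'b \<Rightarrow> 'x \<Rightarrow> 'b \<Rightarrow> 'x) \<Rightarrow> 'y \<Rightarrow> ('y \<Rightarrow> 'b \<Rightarrow> 'y \<Rightarrow> 'b \<Rightarrow> 'y) \<Rightarrow> ('x \<Rightarrow> 'y) \<Rightarrow> bool" where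
  "B_morphism zX phi zY psi f \<longleftrightarrow> f zX = zY \<and>
     (\<forall>x x' b b'. psi (f x) b (f x') b' = f (phi x b x' b'))"

end

theory Submission
  imports Defs
begin

text \<open>The candidate is \<open>g = f \<times> id\<close>. A \<open>B\<close>-morphism commutes with the action, so \<open>f \<times> id\<close> maps
  the semidirect product homomorphically into the other one, and injectivity of \<open>f\<close> lets every
  element of the target carrier be pulled back. Uniqueness holds because every element \<open>(x, b)\<close>
  of \<open>X \<rtimes>\<^sub>\<phi> B\<close> is the sum \<open>(x, 0) + (0, b)\<close>, so a homomorphism is determined by its values
  on these two kinds of elements.\<close>

lemma magma_iso_imp_hom:
  "magma_iso S add z S' add' z' g \<Longrightarrow> magma_hom S add z S' add' z' g"
  by (simp add: magma_iso_def)

lemma sdp_carrier_iff: "(x, b) \<in> sdp_carrier zB zX phi \<longleftrightarrow> phi x zB zX b = x"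
  by (simp add: sdp_carrier_def)

lemma B_action_in_sdp_carrier_fst:
  "B_action addB zB zX phi \<Longrightarrow> (x, zB) \<in> sdp_carrier zB zX phi"
  unfolding B_action_def sdp_carrier_iff by blast

lemma B_action_in_sdp_carrier_snd:
  "B_action addB zB zX phi \<Longrightarrow> (zX, b) \<in> sdp_carrier zB zX phi"
  unfolding B_action_def sdp_carrier_iff by blast

lemma sdp_add_decompose:
  assumes "unitary_magma UNIV addB zB" and "(x, b) \<in> sdp_carrier zB zX phi"
  shows "sdp_add addB phi (x, zB) (zX, b) = (x, b)"
  using assms by (simp add: sdp_add_def sdp_carrier_iff unitary_magma_def)

lemma sdp_hom_eqI:
  assumes B: "unitary_magma UNIV addB zB" and act: "B_action addB zB zX phi"
    and g1: "magma_hom (sdp_carrier zB zX phi) (sdp_add addB phi) (zX, zB) S' add' z' g1"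
    and g2: "magma_hom (sdp_carrier zB zX phi) (sdp_add addB phi) (zX, zB) S' add' z' g2"
    and fst_eq: "\<And>x. g1 (x, zB) = g2 (x, zB)"
    and snd_eq: "\<And>b. g1 (zX, b) = g2 (zX, b)"
    and p: "p \<in> sdp_carrier zB zX phi"
  shows "g1 p = g2 p"
proof -
  obtain x b where p_eq: "p = (x, b)" by (cases p)
  have summands: "(x, zB) \<in> sdp_carrier zB zX phi" "(zX, b) \<in> sdp_carrier zB zX phi"
    using act by (simp_all add: B_action_in_sdp_carrier_fst B_action_in_sdp_carrier_snd)
  have decompose: "sdp_add addB phi (x, zB) (zX, b) = p"
    using sdp_add_decompose[OF B] p unfolding p_eq .
  have "g1 p = g1 (sdp_add addB phi (x, zB) (zX, b))"
    by (simp add: decompose)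
  also have "\<dots> = add' (g1 (x, zB)) (g1 (zX, b))"
    using g1 summands by (simp add: magma_hom_def)
  also have "\<dots> = add' (g2 (x, zB)) (g2 (zX, b))"
    by (simp add: fst_eq snd_eq)
  also have "\<dots> = g2 (sdp_add addB phi (x, zB) (zX, b))"
    using g2 summands by (simp add: magma_hom_def)
  also have "\<dots> = g2 p"
    by (simp add: decompose)
  finally show ?thesis .
qed

lemma B_morphism_sdp_hom:
  assumes "B_morphism zX phi zY psi f"
  shows "magma_hom (sdp_carrier zB zX phi) (sdp_add addB phi) (zX, zB)
           (sdp_carrier zB zY psi) (sdp_add addB psi) (zY, zB) (map_prod f id)"
proof -
  have f0: "f zX = zY" and f_comm: "\<And>x b x' b'. psi (f x) b (f x') b' = f (phi x b x' b')"
    using assms by (simp_all add: B_morphism_def)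
  have "psi (f x) zB zY b = f x" if "phi x zB zX b = x" for x b
    using f_comm[of x zB zX b] that by (simp flip: f0)
  then show ?thesis
    by (auto simp: magma_hom_def sdp_carrier_def sdp_add_def f_comm f0)
qed

lemma B_morphism_in_sdp_carrier_iff:
  assumes f: "B_morphism zX phi zY psi f" and "inj f"
  shows "(f x, b) \<in> sdp_carrier zB zY psi \<longleftrightarrow> (x, b) \<in> sdp_carrier zB zX phi"
proof -
  have "psi (f x) zB zY b = f (phi x zB zX b)"
    using f by (metis B_morphism_def)
  then show ?thesis
    using \<open>inj f\<close> by (simp add: sdp_carrier_iff inj_eq)
qed

lemma B_morphism_sdp_carrier_image:
  assumes f: "B_morphism zX phi zY psi f" and "bij f"
  shows "map_prod f id ` sdp_carrier zB zX phi = sdp_carrier zB zY psi"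
proof -
  have inj: "inj f" "inj (map_prod f (id :: 'b \<Rightarrow> 'b))"
    using \<open>bij f\<close> by (simp_all add: prod.inj_map bij_is_inj)
  have "q \<in> map_prod f id ` sdp_carrier zB zX phi \<longleftrightarrow> q \<in> sdp_carrier zB zY psi" for q
  proof -
    obtain x b where "q = map_prod f id (x, b)"
      using \<open>bij f\<close> by (metis bij_pointE map_prod_simp id_apply prod.exhaust)
    then show ?thesis
      using B_morphism_in_sdp_carrier_iff[OF f inj(1)]
        inj_image_mem_iff[OF inj(2), of "(x, b)" "sdp_carrier zB zX phi"]
      by simp
  qed
  then show ?thesis by blast
qed

lemma B_morphism_sdp_iso:
  assumes f: "B_morphism zX phi zY psi f" and "bij f"
  shows "magma_iso (sdp_carrier zB zX phi) (sdp_add addB phi) (zX, zB)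
           (sdp_carrier zB zY psi) (sdp_add addB psi) (zY, zB) (map_prod f id)"
proof -
  have "inj (map_prod f (id :: 'b \<Rightarrow> 'b))"
    using \<open>bij f\<close> by (simp add: prod.inj_map bij_is_inj)
  then have "inj_on (map_prod f id) (sdp_carrier zB zX phi)"
    by (rule inj_on_subset) simp
  then show ?thesis
    using B_morphism_sdp_hom[OF f] B_morphism_sdp_carrier_image[OF f \<open>bij f\<close>]
    by (simp add: magma_iso_def bij_betw_def)
qed

theorem proposition4p3:
  fixes addB :: "'b \<Rightarrow> 'b \<Rightarrow> 'b" and zB :: 'b
    and zX :: 'x and phi :: "'x \<Rightarrow> 'b \<Rightarrow> 'x \<Rightarrow> 'b \<Rightarrow> 'x"
    and zY :: 'y and psi :: "'y \<Rightarrow> 'b \<Rightarrow> 'y \<Rightarrow> 'b \<Rightarrow> 'y"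
    and f :: "'x \<Rightarrow> 'y"
  assumes B: "unitary_magma UNIV addB zB"
    and act1: "B_action addB zB zX phi"
    and act2: "B_action addB zB zY psi"
    and f_iso: "magma_iso UNIV (\<lambda>x x'. phi x zB x' zB) zX UNIV (\<lambda>y y'. psi y zB y' zB) zY f"
    and f_Bmor: "B_morphism zX phi zY psi f"
  shows "\<exists>g. magma_iso (sdp_carrier zB zX phi) (sdp_add addB phi) (zX, zB)
                       (sdp_carrier zB zY psi) (sdp_add addB psi) (zY, zB) g
           \<and> (\<forall>p\<in>sdp_carrier zB zX phi. fst (g p) = f (fst p))
           \<and> (\<forall>x. g (x, zB) = (f x, zB))
           \<and> (\<forall>b. g (zX, b) = (zY, b))
           \<and> (\<forall>g'. magma_iso (sdp_carrier zB zX phi) (sdp_add addB phi) (zX, zB)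
                       (sdp_carrier zB zY psi) (sdp_add addB psi) (zY, zB) g'
                 \<and> (\<forall>p\<in>sdp_carrier zB zX phi. fst (g' p) = f (fst p))
                 \<and> (\<forall>x. g' (x, zB) = (f x, zB))
                 \<and> (\<forall>b. g' (zX, b) = (zY, b))
                 \<longrightarrow> (\<forall>p\<in>sdp_carrier zB zX phi. g' p = g p))"
proof -
  have "bij f"
    using f_iso by (simp add: magma_iso_def)
  have f0: "f zX = zY"
    using f_Bmor by (simp add: B_morphism_def)
  note iso = B_morphism_sdp_iso[OF f_Bmor \<open>bij f\<close>, of zB addB]
  show ?thesis
  proof (intro exI[of _ "map_prod f id"] conjI allI ballI impI iso)
    fix g' p
    assume g': "magma_iso (sdp_carrier zB zX phi) (sdp_add addB phi) (zX, zB)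
              (sdp_carrier zB zY psi) (sdp_add addB psi) (zY, zB) g'
            \<and> (\<forall>p\<in>sdp_carrier zB zX phi. fst (g' p) = f (fst p))
            \<and> (\<forall>x. g' (x, zB) = (f x, zB))
            \<and> (\<forall>b. g' (zX, b) = (zY, b))"
      and p: "p \<in> sdp_carrier zB zX phi"
    show "g' p = map_prod f id p"
      using sdp_hom_eqI[OF B act1 magma_iso_imp_hom[OF g'[THEN conjunct1]]
          B_morphism_sdp_hom[OF f_Bmor] _ _ p] g' f0
      by simp
  qed (simp_all add: f0)
qed

end
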